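(* Let $f:\mathbb{R}^n\to\mathbb{R}$ be continuously differentiable with $L_f$-Lipschitz gradient, let $g:\mathbb{R}^n\to\mathbb{R}\cup\{+\infty\}$ be proper, closed and $M$-weakly convex, $\varphi=f+g$, and let $(x^k),(w^k),(\gamma_k)$ be generated by MINFBE with $0<\gamma_0\le 1/(2M)$. Let $c=\min\{\gamma_0,\xi(1-\beta)/L_f,1/M\}>0$. Then for all $k$, $$\min_{i\le k}\|R_{\gamma_i}(x^i)\|^2\le\frac{2}{k+1}\,\frac{\varphi(x^0)-\inf\varphi}{c-Mc^2}.$$ If in addition $\beta>0$, then also $$\min_{i\le k}\|R_{\gamma_i}(w^i)\|^2\le\frac{2}{k+1}\,\frac{\varphi(x^0)-\inf\varphi}{\beta c}.$$
   Context: $g$ is $M$-weakly convex if $g+\frac M2\|\cdot\|^2$ is convex. For $\gamma>0$: $T_\gamma(x)=\operatorname{prox}_{\gamma g}(x-\gamma\nabla f(x))$ with $\operatorname{prox}_{\gamma g}(x)=\arg\min_u\{g(u)+\frac1{2\gamma}\|u-x\|^2\}$, $R_\gamma(x)=\gamma^{-1}(x-T_\gamma(x))$, $\varphi_\gamma(x)=\min_u\{f(x)+\langle\nabla f(x),u-x\rangle+g(u)+\frac1{2\gamma}\|u-x\|^2\}$. MINFBE: given $x^0$, $\gamma_0>0$, $\xi\in(0,1)$, $\beta\in[0,1)$, set $k=0$ and repeat: (1) if $R_{\gamma_k}(x^k)=0$ stop; (2) choose $d^k$ with $\langle d^k,\nabla\varphi_{\gamma_k}(x^k)\rangle\le0$;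 (3) choose $\tau_k\ge0$ and $w^k=x^k+\tau_kd^k$ with $\varphi_{\gamma_k}(w^k)\le\varphi_{\gamma_k}(x^k)$; (4) if $f(T_{\gamma_k}(w^k))>f(w^k)-\gamma_k\langle\nabla f(w^k),R_{\gamma_k}(w^k)\rangle+\frac{(1-\beta)\gamma_k}{2}\|R_{\gamma_k}(w^k)\|^2$, replace $\gamma_k$ by $\xi\gamma_k$ and go back to (1) with the same $k$; (5) otherwise set $x^{k+1}=T_{\gamma_k}(w^k)$, $\gamma_{k+1}=\gamma_k$, $k\leftarrow k+1$, go to (1). *)

theory Defs
  imports "HOL-Analysis.Analysis" "HOL-Library.Extended_Real"
begin

text \<open>Extended-valued functions g : R^n -> R \<union> {+\<infinity>} are modelled as ereal-valued functions
  with proper meaning: never -\<infinity>, and not identically +\<infinity>.\<close>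

definition proper_fun :: "('a \<Rightarrow> ereal) \<Rightarrow> bool" where
  "proper_fun g \<longleftrightarrow> (\<forall>x. g x \<noteq> -\<infinity>) \<and> (\<exists>x. g x \<noteq> \<infinity>)"

definition closed_fun :: "('a::topological_space \<Rightarrow> ereal) \<Rightarrow> bool" where
  "closed_fun g \<longleftrightarrow> closed {(x, t::real). g x \<le> ereal t}"

definition convex_fun :: "('a::real_vector \<Rightarrow> ereal) \<Rightarrow> bool" where
  "convex_fun g \<longleftrightarrow> convex {(x, t::real). g x \<le> ereal t}"

definition weakly_convex :: "real \<Rightarrow> ('a::real_normed_vector \<Rightarrow> ereal) \<Rightarrow> bool" where
  "weakly_convex M g \<longleftrightarrow> convex_fun (\<lambda>x. g x + ereal (M / 2 * (norm x)\<^sup>2))"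

text \<open>proximal map: the (unique, for small gamma) minimizer\<close>
definition prox :: "('a::real_normed_vector \<Rightarrow> ereal) \<Rightarrow> real \<Rightarrow> 'a \<Rightarrow> 'a" where
  "prox g \<gamma> x = (THE u. \<forall>v. g u + ereal ((norm (u - x))\<^sup>2 / (2 * \<gamma>))
                              \<le> g v + ereal ((norm (v - x))\<^sup>2 / (2 * \<gamma>)))"

definition Tfb :: "('a::real_inner \<Rightarrow> 'a) \<Rightarrow> ('a \<Rightarrow> ereal) \<Rightarrow> real \<Rightarrow> 'a \<Rightarrow> 'a" where
  "Tfb gf g \<gamma> x = prox g \<gamma> (x - \<gamma> *\<^sub>R gf x)"

definition Rfb :: "('a::real_inner \<Rightarrow> 'a) \<Rightarrow> ('a \<Rightarrow> ereal) \<Rightarrow> real \<Rightarrow> 'a \<Rightarrow> 'a" where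
  "Rfb gf g \<gamma> x = (1 / \<gamma>) *\<^sub>R (x - Tfb gf g \<gamma> x)"

definition FBE :: "('a::real_inner \<Rightarrow> real) \<Rightarrow> ('a \<Rightarrow> 'a) \<Rightarrow> ('a \<Rightarrow> ereal) \<Rightarrow> real \<Rightarrow> 'a \<Rightarrow> ereal" where
  "FBE f gf g \<gamma> x = (INF u. ereal (f x + gf x \<bullet> (u - x) + (norm (u - x))\<^sup>2 / (2 * \<gamma>)) + g u)"

text \<open>Steps (2)-(3) of MINFBE at stepsize gamma from point xk: w is admissible if
  w = xk + tau d with tau >= 0, d a non-ascent direction of the FBE (i.e. <d, grad FBE(xk)> <= 0,
  the gradient being the Frechet derivative of the real-valued FBE), and FBE(w) <= FBE(xk).\<close>
definition minfbe_admissible ::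
  "('a::real_inner \<Rightarrow> real) \<Rightarrow> ('a \<Rightarrow> 'a) \<Rightarrow> ('a \<Rightarrow> ereal) \<Rightarrow> real \<Rightarrow> 'a \<Rightarrow> 'a \<Rightarrow> bool" where
  "minfbe_admissible f gf g \<gamma> xk w \<longleftrightarrow>
     (\<exists>d \<tau>. \<tau> \<ge> 0 \<and> w = xk + \<tau> *\<^sub>R d \<and>
        (\<forall>D. ((\<lambda>y. real_of_ereal (FBE f gf g \<gamma> y)) has_derivative D) (at xk) \<longrightarrow> D d \<le> 0) \<and>
        FBE f gf g \<gamma> w \<le> FBE f gf g \<gamma> xk)"

definition minfbe_accept ::
  "('a::real_inner \<Rightarrow> real) \<Rightarrow> ('a \<Rightarrow> 'a) \<Rightarrow> ('a \<Rightarrow> ereal) \<Rightarrow> real \<Rightarrow> real \<Rightarrow> 'a \<Rightarrow> bool" where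
  "minfbe_accept f gf g \<beta> \<gamma> w \<longleftrightarrow>
     f (Tfb gf g \<gamma> w) \<le> f w - \<gamma> * (gf w \<bullet> Rfb gf g \<gamma> w)
                        + (1 - \<beta>) * \<gamma> / 2 * (norm (Rfb gf g \<gamma> w))\<^sup>2"

text \<open>(x, w, gamma) are (infinite) sequences generated by MINFBE with parameters gamma0, xi, beta.
  gamma k is the accepted stepsize at iteration k; it arises from the previous stepsize
  (gamma0 for k = 0) by m backtracking reductions, each triggered by a rejected admissible
  trial point.\<close>
definition minfbe_seq ::
  "('a::real_inner \<Rightarrow> real) \<Rightarrow> ('a \<Rightarrow> 'a) \<Rightarrow> ('a \<Rightarrow> ereal) \<Rightarrow> real \<Rightarrow> real \<Rightarrow> real \<Rightarrow>
   (nat \<Rightarrow> 'a) \<Rightarrow> (nat \<Rightarrow> 'a) \<Rightarrow> (nat \<Rightarrow> real) \<Rightarrow> bool" where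
  "minfbe_seq f gf g \<gamma>0 \<xi> \<beta> x w \<gamma> \<longleftrightarrow>
    (\<forall>k. let \<gamma>p = (if k = 0 then \<gamma>0 else \<gamma> (k - 1)) in
       (\<exists>m::nat. \<gamma> k = \<xi> ^ m * \<gamma>p \<and>
          (\<forall>l<m. \<exists>w'. minfbe_admissible f gf g (\<xi> ^ l * \<gamma>p) (x k) w' \<and>
                        \<not> minfbe_accept f gf g \<beta> (\<xi> ^ l * \<gamma>p) w')) \<and>
       minfbe_admissible f gf g (\<gamma> k) (x k) (w k) \<and>
       minfbe_accept f gf g \<beta> (\<gamma> k) (w k) \<and>
       x (Suc k) = Tfb gf g (\<gamma> k) (w k))"

end

theory Submission
  imports Defs
begin

text \<open>Weak convexity makes the prox objective u \<mapsto> g u + |u - y|^2/(2 gamma) strongly convex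
  for gamma M < 1; hence the forward-backward step is well defined and the envelope satisfies
  FBE(x) <= phi(x) - (gamma - M gamma^2)/2 |R(x)|^2. The acceptance test says
  phi(T(w)) <= FBE(w) - beta gamma/2 |R(w)|^2, and the choice of w gives FBE(w) <= FBE(x).
  By the descent lemma the test passes as soon as gamma <= (1 - beta)/L_f, so backtracking keeps
  every gamma_k in [c, gamma_0], where gamma_0 <= 1/(2M). Each iteration therefore decreases phi
  by at least (c - M c^2)/2 |R(x^k)|^2 + beta c/2 |R(w^k)|^2; telescoping and bounding the
  minimum by the average gives both rates.\<close>

definition prox_minimizer :: "('a::real_normed_vector \<Rightarrow> ereal) \<Rightarrow> real \<Rightarrow> 'a \<Rightarrow> 'a \<Rightarrow> bool" where
  "prox_minimizer g \<gamma> y p \<longleftrightarrow>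
     (\<forall>v. g p + ereal ((norm (p - y))\<^sup>2 / (2 * \<gamma>)) \<le> g v + ereal ((norm (v - y))\<^sup>2 / (2 * \<gamma>)))"

lemma norm_convex_combination_power2:
  fixes a b :: "'a::real_inner"
  shows "(norm (l *\<^sub>R a + (1 - l) *\<^sub>R b))\<^sup>2
         = l * (norm a)\<^sup>2 + (1 - l) * (norm b)\<^sup>2 - l * (1 - l) * (norm (a - b))\<^sup>2"
  unfolding power2_norm_eq_inner
  by (simp add: inner_add_left inner_add_right inner_diff_left inner_diff_right inner_commute
      algebra_simps)

lemma weakly_convex_combination_le:
  fixes g :: "'a::real_inner \<Rightarrow> ereal"
  assumes wc: "weakly_convex M g" and ga: "g a = ereal ga" and gb: "g b = ereal gb"
    and l: "0 \<le> l" "l \<le> 1"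
  shows "g (l *\<^sub>R a + (1 - l) *\<^sub>R b)
         \<le> ereal (l * ga + (1 - l) * gb + M / 2 * l * (1 - l) * (norm (a - b))\<^sup>2)"
proof -
  let ?E = "{(x, t::real). g x + ereal (M / 2 * (norm x)\<^sup>2) \<le> ereal t}"
  let ?z = "l *\<^sub>R a + (1 - l) *\<^sub>R b"
  let ?bound = "l * ga + (1 - l) * gb + M / 2 * l * (1 - l) * (norm (a - b))\<^sup>2"
  have "convex ?E" using wc unfolding weakly_convex_def convex_fun_def by simp
  moreover have "(a, ga + M / 2 * (norm a)\<^sup>2) \<in> ?E" "(b, gb + M / 2 * (norm b)\<^sup>2) \<in> ?E"
    using ga gb by simp_all
  ultimately have "l *\<^sub>R (a, ga + M / 2 * (norm a)\<^sup>2) + (1 - l) *\<^sub>R (b, gb + M / 2 * (norm b)\<^sup>2) \<in> ?E"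
    using l by (intro convexD[of ?E]) simp_all
  then have "g ?z + ereal (M / 2 * (norm ?z)\<^sup>2)
      \<le> ereal (l * (ga + M / 2 * (norm a)\<^sup>2) + (1 - l) * (gb + M / 2 * (norm b)\<^sup>2))"
    by simp
  also have "l * (ga + M / 2 * (norm a)\<^sup>2) + (1 - l) * (gb + M / 2 * (norm b)\<^sup>2)
      = ?bound + M / 2 * (norm ?z)\<^sup>2"
    unfolding norm_convex_combination_power2 by (simp add: field_simps)
  finally show ?thesis by (cases "g ?z") auto
qed

lemma closed_epigraph_add_continuous:
  fixes g :: "'a::real_normed_vector \<Rightarrow> ereal"
  assumes "closed_fun g" "continuous_on UNIV q" "\<forall>x. g x \<noteq> -\<infinity>"
  shows "closed {(x, t::real). g x + ereal (q x) \<le> ereal t}"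
proof -
  have "g x + ereal (q x) \<le> ereal t \<longleftrightarrow> g x \<le> ereal (t - q x)" for x t
    using assms(3) by (cases "g x") auto
  then have "{(x, t::real). g x + ereal (q x) \<le> ereal t}
      = (\<lambda>(x, t). (x, t - q x)) -` {(x, t::real). g x \<le> ereal t}"
    by (simp add: set_eq_iff)
  moreover have "continuous_on UNIV (\<lambda>p::'a \<times> real. q (fst p))"
    by (rule continuous_on_compose2[OF assms(2) continuous_on_fst[OF continuous_on_id]]) simp
  then have "continuous_on UNIV (\<lambda>(x, t). (x, t - q x))"
    unfolding case_prod_unfold by (intro continuous_intros)
  ultimately show ?thesis
    using closed_vimage[of "{(x, t::real). g x \<le> ereal t}"] assms(1)
    unfolding closed_fun_def by simp
qed

lemma weakly_convex_quadratic_minorant: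
  fixes g :: "'a::euclidean_space \<Rightarrow> ereal"
  assumes pr: "proper_fun g" and cl: "closed_fun g" and wc: "weakly_convex M g"
  obtains \<alpha> a where "\<And>x. ereal (\<alpha> - a \<bullet> x - M / 2 * (norm x)\<^sup>2) \<le> g x"
proof -
  let ?E = "{(x, t::real). g x + ereal (M / 2 * (norm x)\<^sup>2) \<le> ereal t}"
  have ninf: "\<forall>x. g x \<noteq> -\<infinity>" using pr unfolding proper_fun_def by auto
  obtain x1 r where r: "g x1 = ereal r"
    using pr unfolding proper_fun_def by (metis ereal_cases)
  have "convex ?E" using wc unfolding weakly_convex_def convex_fun_def by simp
  moreover have "closed ?E"
    by (rule closed_epigraph_add_continuous[OF cl _ ninf]) (intro continuous_intros)
  moreover have "(x1, r + M / 2 * (norm x1)\<^sup>2 - 1) \<notin> ?E" using r by simp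
  ultimately obtain A b where below: "A \<bullet> (x1, r + M / 2 * (norm x1)\<^sup>2 - 1) < b"
    and above: "\<forall>p\<in>?E. b < A \<bullet> p"
    using separating_hyperplane_closed_point by blast
  obtain a1 s where A: "A = (a1, s)" by (cases A)
  have "(x1, r + M / 2 * (norm x1)\<^sup>2) \<in> ?E" using r by simp
  then have "a1 \<bullet> x1 + s * (r + M / 2 * (norm x1)\<^sup>2 - 1) < a1 \<bullet> x1 + s * (r + M / 2 * (norm x1)\<^sup>2)"
    using below above A by fastforce
  then have s: "s > 0" by (simp add: algebra_simps)
  have "ereal (b / s - ((1 / s) *\<^sub>R a1) \<bullet> x - M / 2 * (norm x)\<^sup>2) \<le> g x" for x
  proof (cases "g x")
    case (real gx)
    then have "(x, gx + M / 2 * (norm x)\<^sup>2) \<in> ?E" by simp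
    with above A have "b < a1 \<bullet> x + s * (gx + M / 2 * (norm x)\<^sup>2)" by auto
    with s have "b / s < (a1 \<bullet> x) / s + (gx + M / 2 * (norm x)\<^sup>2)"
      by (simp add: divide_simps algebra_simps)
    then show ?thesis using real by simp
  qed (use ninf in auto)
  then show ?thesis by (rule that)
qed

lemma prox_objective_quadratic_lower_bound:
  fixes a y u :: "'a::real_inner"
  assumes "0 < \<gamma>" and minorant: "ereal (\<alpha> - a \<bullet> u - M / 2 * (norm u)\<^sup>2) \<le> g u"
  shows "ereal ((1 / (2 * \<gamma>) - M / 2) * (norm u)\<^sup>2 - (norm a + norm y / \<gamma>) * norm u + \<alpha>)
         \<le> g u + ereal ((norm (u - y))\<^sup>2 / (2 * \<gamma>))"
proof -
  have "(norm u)\<^sup>2 - 2 * (norm u * norm y) \<le> (norm (u - y))\<^sup>2"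
  proof -
    have "(norm (u - y))\<^sup>2 = (norm u)\<^sup>2 - 2 * (u \<bullet> y) + (norm y)\<^sup>2"
      unfolding power2_norm_eq_inner by (simp add: inner_diff_left inner_diff_right inner_commute)
    then show ?thesis using norm_cauchy_schwarz[of u y] zero_le_power2[of "norm y"] by linarith
  qed
  then have "((norm u)\<^sup>2 - 2 * (norm u * norm y)) / (2 * \<gamma>) \<le> (norm (u - y))\<^sup>2 / (2 * \<gamma>)"
    using assms(1) by (intro divide_right_mono) auto
  moreover have "((norm u)\<^sup>2 - 2 * (norm u * norm y)) / (2 * \<gamma>)
      = (norm u)\<^sup>2 / (2 * \<gamma>) - norm u * (norm y / \<gamma>)"
    using assms(1) by (simp add: field_simps)
  moreover have "a \<bullet> u \<le> norm a * norm u" by (rule norm_cauchy_schwarz)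
  ultimately have "(1 / (2 * \<gamma>) - M / 2) * (norm u)\<^sup>2 - (norm a + norm y / \<gamma>) * norm u + \<alpha>
      \<le> (\<alpha> - a \<bullet> u - M / 2 * (norm u)\<^sup>2) + (norm (u - y))\<^sup>2 / (2 * \<gamma>)"
    by (simp add: algebra_simps)
  also have "ereal \<dots> \<le> g u + ereal ((norm (u - y))\<^sup>2 / (2 * \<gamma>))"
    using add_right_mono[OF minorant, of "ereal ((norm (u - y))\<^sup>2 / (2 * \<gamma>))"] by simp
  finally show ?thesis by simp
qed

lemma bounded_quadratic_sublevel:
  fixes S :: "('a::real_normed_vector \<times> real) set"
  assumes "0 < \<mu>" and S: "\<And>u t. (u, t) \<in> S \<Longrightarrow> \<mu> * (norm u)\<^sup>2 - B * norm u - C \<le> t \<and> t \<le> K"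
  shows "bounded S"
proof -
  define R where "R = max 1 ((\<bar>B\<bar> + \<bar>K + C\<bar>) / \<mu>)"
  have "1 \<le> R" "(\<bar>B\<bar> + \<bar>K + C\<bar>) / \<mu> \<le> R" unfolding R_def by simp_all
  then have R: "1 \<le> R" "\<bar>B\<bar> + \<bar>K + C\<bar> \<le> \<mu> * R"
    using assms(1) by (simp_all add: pos_divide_le_eq mult.commute)
  have bnd: "norm u \<le> R \<and> \<bar>t\<bar> \<le> \<bar>K\<bar> + \<bar>B\<bar> * R + \<bar>C\<bar>" if "(u, t) \<in> S" for u t
  proof -
    have ut: "\<mu> * (norm u)\<^sup>2 - B * norm u - C \<le> t" "t \<le> K" using S[OF that] by auto
    have u: "norm u \<le> R"
    proof (rule ccontr)
      assume "\<not> norm u \<le> R"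
      then have r: "R < norm u" "1 < norm u" using R(1) by auto
      have "\<bar>K + C\<bar> \<le> \<bar>K + C\<bar> * norm u" using r(2) mult_left_mono[of 1 "norm u" "\<bar>K + C\<bar>"] by simp
      then have "B * norm u + (K + C) \<le> \<bar>B\<bar> * norm u + \<bar>K + C\<bar> * norm u"
        using abs_ge_self[of "K + C"] mult_right_mono[OF abs_ge_self[of B] norm_ge_zero[of u]]
        by linarith
      also have "\<dots> \<le> \<mu> * R * norm u"
        using R(2) by (metis distrib_right mult_right_mono norm_ge_zero)
      also have "\<dots> < \<mu> * norm u * norm u"
        using r assms(1) by (intro mult_strict_right_mono) auto
      finally show False using ut by (simp add: power2_eq_square)
    qed
    have "B * norm u \<le> \<bar>B\<bar> * R"
      using u by (meson abs_ge_self abs_ge_zero mult_mono norm_ge_zero order_trans)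
    moreover have "0 \<le> \<mu> * (norm u)\<^sup>2" "0 \<le> \<bar>B\<bar> * R" using assms(1) R(1) by simp_all
    ultimately have "- (\<bar>B\<bar> * R) - \<bar>C\<bar> \<le> t" "0 \<le> \<bar>B\<bar> * R"
      using ut abs_ge_self[of C] by linarith+
    with ut u abs_ge_self[of K] abs_ge_zero[of K] abs_ge_zero[of C] show ?thesis
      unfolding abs_le_iff by (intro conjI) linarith+
  qed
  have "norm p \<le> R + (\<bar>K\<bar> + \<bar>B\<bar> * R + \<bar>C\<bar>)" if "p \<in> S" for p
  proof -
    obtain u t where p: "p = (u, t)" by force
    then have "norm u \<le> R" "\<bar>t\<bar> \<le> \<bar>K\<bar> + \<bar>B\<bar> * R + \<bar>C\<bar>" using that bnd by auto
    then show ?thesis using norm_Pair_le[of u t] unfolding p by simp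
  qed
  then show ?thesis unfolding bounded_iff by blast
qed

lemma prox_minimizer_exists:
  fixes g :: "'a::euclidean_space \<Rightarrow> ereal"
  assumes pr: "proper_fun g" and cl: "closed_fun g" and wc: "weakly_convex M g"
    and \<gamma>: "0 < \<gamma>" "\<gamma> * M < 1"
  obtains p where "prox_minimizer g \<gamma> y p"
proof -
  define h where "h u = g u + ereal ((norm (u - y))\<^sup>2 / (2 * \<gamma>))" for u
  have ninf: "\<forall>x. g x \<noteq> -\<infinity>" using pr unfolding proper_fun_def by auto
  obtain x1 r where r: "g x1 = ereal r"
    using pr unfolding proper_fun_def by (metis ereal_cases)
  obtain \<alpha> a where minorant: "\<And>u. ereal (\<alpha> - a \<bullet> u - M / 2 * (norm u)\<^sup>2) \<le> g u"
    using weakly_convex_quadratic_minorant[OF pr cl wc] by blast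
  define K where "K = r + (norm (x1 - y))\<^sup>2 / (2 * \<gamma>)"
  define S where "S = {(u, t). h u \<le> ereal t \<and> t \<le> K}"
  have "closed {(u, t::real). h u \<le> ereal t}"
    unfolding h_def
    by (rule closed_epigraph_add_continuous[OF cl _ ninf]) (intro continuous_intros, use \<gamma> in auto)
  moreover have "closed {p::'a \<times> real. snd p \<le> K}"
    by (intro closed_Collect_le continuous_intros)
  moreover have "S = {(u, t::real). h u \<le> ereal t} \<inter> {p. snd p \<le> K}"
    unfolding S_def by auto
  ultimately have "closed S" by auto
  moreover have "bounded S"
  proof (rule bounded_quadratic_sublevel)
    show "0 < 1 / (2 * \<gamma>) - M / 2" using \<gamma> by (simp add: field_simps)
    fix u t assume "(u, t) \<in> S"
    then have ht: "h u \<le> ereal t" and "t \<le> K" unfolding S_def by auto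
    moreover have lb: "ereal ((1 / (2 * \<gamma>) - M / 2) * (norm u)\<^sup>2 - (norm a + norm y / \<gamma>) * norm u + \<alpha>)
        \<le> h u"
      unfolding h_def by (rule prox_objective_quadratic_lower_bound[OF \<gamma>(1) minorant])
    ultimately show "(1 / (2 * \<gamma>) - M / 2) * (norm u)\<^sup>2 - (norm a + norm y / \<gamma>) * norm u - - \<alpha> \<le> t
        \<and> t \<le> K"
      using order_trans[OF lb ht] by simp
  qed
  moreover have "(x1, K) \<in> S" unfolding S_def h_def K_def using r by simp
  ultimately have "compact S" "S \<noteq> {}" by (auto simp: compact_eq_bounded_closed)
  then obtain q where "q \<in> S" "\<forall>q'\<in>S. snd q \<le> snd q'"
    using continuous_attains_inf[of S snd] continuous_on_snd[OF continuous_on_id] by blast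
  then obtain p tp where p: "h p \<le> ereal tp" "tp \<le> K" and tp_min: "\<forall>(u, t)\<in>S. tp \<le> t"
    unfolding S_def by auto
  have "h p \<le> h v" for v
  proof (cases "h v \<le> ereal K")
    case True
    then obtain hv where hv: "h v = ereal hv" using ninf unfolding h_def by (cases "g v") auto
    with True have "(v, hv) \<in> S" unfolding S_def by simp
    with tp_min have "tp \<le> hv" by auto
    with p(1) hv show ?thesis by (simp add: order_trans)
  next
    case False
    have "h p \<le> ereal K" using order_trans[OF p(1)] p(2) by simp
    with False show ?thesis by simp
  qed
  then have "prox_minimizer g \<gamma> y p" unfolding prox_minimizer_def h_def by blast
  then show ?thesis by (rule that)
qed

lemma prox_minimizer_finite:
  assumes pr: "proper_fun g" and p: "prox_minimizer g \<gamma> y p"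
  obtains gp where "g p = ereal gp"
proof -
  obtain x1 r where r: "g x1 = ereal r"
    using pr unfolding proper_fun_def by (metis ereal_cases)
  have "g p + ereal ((norm (p - y))\<^sup>2 / (2 * \<gamma>)) \<le> ereal (r + (norm (x1 - y))\<^sup>2 / (2 * \<gamma>))"
    using p r unfolding prox_minimizer_def by (metis plus_ereal.simps(1))
  then have "g p \<noteq> \<infinity>" by auto
  moreover have "g p \<noteq> -\<infinity>" using pr unfolding proper_fun_def by auto
  ultimately show ?thesis using that by (cases "g p") auto
qed

text \<open>The prox objective is (1/gamma - M)-strongly convex: compare p with the convex
  combinations (1 - s) x + s p and let s tend to 1.\<close>
lemma prox_minimizer_growth:
  fixes g :: "'a::real_inner \<Rightarrow> ereal"
  assumes wc: "weakly_convex M g" and \<gamma>: "0 < \<gamma>" and p: "prox_minimizer g \<gamma> y p"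
    and gp: "g p = ereal gp" and gx: "g x = ereal gx"
  shows "gp + (norm (p - y))\<^sup>2 / (2 * \<gamma>) + (1 / \<gamma> - M) / 2 * (norm (x - p))\<^sup>2
         \<le> gx + (norm (x - y))\<^sup>2 / (2 * \<gamma>)"
proof -
  define P where "P = (norm (p - y))\<^sup>2 / (2 * \<gamma>)"
  define X where "X = (norm (x - y))\<^sup>2 / (2 * \<gamma>)"
  define d where "d = (norm (x - p))\<^sup>2"
  define C where "C = (1 / \<gamma> - M) / 2 * d"
  have "s * C \<le> (gx + X) - (gp + P)" if s: "0 < s" "s < 1" for s
  proof -
    define z where "z = (1 - s) *\<^sub>R x + s *\<^sub>R p"
    have "z - y = (1 - s) *\<^sub>R (x - y) + (1 - (1 - s)) *\<^sub>R (p - y)"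
      unfolding z_def by (simp add: algebra_simps)
    then have "(norm (z - y))\<^sup>2 = (1 - s) * (norm (x - y))\<^sup>2 + s * (norm (p - y))\<^sup>2 - (1 - s) * s * d"
      unfolding d_def by (simp only: norm_convex_combination_power2) simp
    then have Z: "(norm (z - y))\<^sup>2 / (2 * \<gamma>) = (1 - s) * X + s * P - (1 - s) * s * d / (2 * \<gamma>)"
      unfolding X_def P_def by (simp add: diff_divide_distrib add_divide_distrib)
    have gz: "g z \<le> ereal ((1 - s) * gx + s * gp + M / 2 * (1 - s) * s * d)"
      using weakly_convex_combination_le[OF wc gx gp, of "1 - s"] s unfolding z_def d_def by simp
    have "ereal (gp + P) \<le> g z + ereal ((norm (z - y))\<^sup>2 / (2 * \<gamma>))"
      using p gp unfolding prox_minimizer_def P_def by (metis plus_ereal.simps(1))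
    also have "\<dots> \<le> ereal ((1 - s) * gx + s * gp + M / 2 * (1 - s) * s * d
        + ((1 - s) * X + s * P - (1 - s) * s * d / (2 * \<gamma>)))"
      unfolding Z
      using add_right_mono[OF gz, of "ereal ((1 - s) * X + s * P - (1 - s) * s * d / (2 * \<gamma>))"]
      by simp
    finally have "(1 - s) * (gp + P + s * C) \<le> (1 - s) * (gx + X)"
      unfolding C_def using \<gamma> by (simp add: field_simps)
    then show ?thesis using s by simp
  qed
  then have "C \<le> (gx + X) - (gp + P)" by (rule field_le_mult_one_interval)
  then show ?thesis unfolding C_def d_def X_def P_def by linarith
qed

lemma prox_minimizer_unique:
  fixes g :: "'a::real_inner \<Rightarrow> ereal"
  assumes pr: "proper_fun g" and wc: "weakly_convex M g" and \<gamma>: "0 < \<gamma>" "\<gamma> * M < 1"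
    and p: "prox_minimizer g \<gamma> y p" and q: "prox_minimizer g \<gamma> y q"
  shows "p = q"
proof -
  obtain gp gq where gp: "g p = ereal gp" and gq: "g q = ereal gq"
    using prox_minimizer_finite[OF pr p] prox_minimizer_finite[OF pr q] by metis
  have "gp + (norm (p - y))\<^sup>2 / (2 * \<gamma>) + (1 / \<gamma> - M) / 2 * (norm (q - p))\<^sup>2
      \<le> gq + (norm (q - y))\<^sup>2 / (2 * \<gamma>)"
    by (rule prox_minimizer_growth[OF wc \<gamma>(1) p gp gq])
  moreover have "gq + (norm (q - y))\<^sup>2 / (2 * \<gamma>) \<le> gp + (norm (p - y))\<^sup>2 / (2 * \<gamma>)"
    using q gp gq unfolding prox_minimizer_def by (metis ereal_less_eq(3) plus_ereal.simps(1))
  ultimately have "(1 / \<gamma> - M) / 2 * (norm (q - p))\<^sup>2 \<le> 0" by linarith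
  moreover have "0 < (1 / \<gamma> - M) / 2" using \<gamma> by (simp add: field_simps)
  ultimately show ?thesis by (simp add: mult_le_0_iff)
qed

lemma prox_minimizer_prox:
  fixes g :: "'a::euclidean_space \<Rightarrow> ereal"
  assumes "proper_fun g" "closed_fun g" "weakly_convex M g" "0 < \<gamma>" "\<gamma> * M < 1"
  shows "prox_minimizer g \<gamma> y (prox g \<gamma> y)"
proof -
  obtain p where "prox_minimizer g \<gamma> y p" using prox_minimizer_exists[OF assms] by blast
  then have "\<exists>!p. prox_minimizer g \<gamma> y p"
    using prox_minimizer_unique[OF assms(1,3-5)] by blast
  then show ?thesis unfolding prox_def prox_minimizer_def[symmetric] by (rule theI')
qed

lemma Tfb_eq_diff_Rfb: "\<gamma> \<noteq> 0 \<Longrightarrow> Tfb gf g \<gamma> x = x - \<gamma> *\<^sub>R Rfb gf g \<gamma> x"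
  by (simp add: Rfb_def)

lemma norm_diff_gradient_step_power2:
  fixes u x v :: "'a::real_inner"
  assumes "0 < \<gamma>"
  shows "(norm (u - (x - \<gamma> *\<^sub>R v)))\<^sup>2 / (2 * \<gamma>)
         = (norm (u - x))\<^sup>2 / (2 * \<gamma>) + v \<bullet> (u - x) + \<gamma> / 2 * (norm v)\<^sup>2"
proof -
  have "u - (x - \<gamma> *\<^sub>R v) = (u - x) + \<gamma> *\<^sub>R v" by (simp add: algebra_simps)
  then have "(norm (u - (x - \<gamma> *\<^sub>R v)))\<^sup>2 = (norm (u - x))\<^sup>2 + 2 * \<gamma> * (v \<bullet> (u - x)) + \<gamma>\<^sup>2 * (norm v)\<^sup>2"
    unfolding power2_norm_eq_inner
    by (simp add: inner_add_left inner_add_right inner_commute power2_eq_square algebra_simps)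
  then show ?thesis using assms by (simp add: field_simps power2_eq_square)
qed

lemma FBE_eq_at_Tfb:
  fixes g :: "'a::euclidean_space \<Rightarrow> ereal"
  assumes "proper_fun g" "closed_fun g" "weakly_convex M g" and \<gamma>: "0 < \<gamma>" "\<gamma> * M < 1"
  shows "FBE f gf g \<gamma> x = ereal (f x - \<gamma> * (gf x \<bullet> Rfb gf g \<gamma> x) + \<gamma> / 2 * (norm (Rfb gf g \<gamma> x))\<^sup>2)
                          + g (Tfb gf g \<gamma> x)"
proof -
  define y where "y = x - \<gamma> *\<^sub>R gf x"
  define T where "T = Tfb gf g \<gamma> x"
  define R where "R = Rfb gf g \<gamma> x"
  define val where "val u = ereal (f x + gf x \<bullet> (u - x) + (norm (u - x))\<^sup>2 / (2 * \<gamma>)) + g u" for u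
  have T_min: "prox_minimizer g \<gamma> y T"
    unfolding T_def Tfb_def y_def by (rule prox_minimizer_prox[OF assms])
  have val_eq: "val u = ereal (f x - \<gamma> / 2 * (norm (gf x))\<^sup>2) + (g u + ereal ((norm (u - y))\<^sup>2 / (2 * \<gamma>)))"
    for u
    unfolding val_def y_def norm_diff_gradient_step_power2[OF \<gamma>(1)] by (cases "g u") simp_all
  have "val T \<le> val u" for u
    unfolding val_eq using T_min unfolding prox_minimizer_def by (simp add: add_left_mono)
  then have "FBE f gf g \<gamma> x = val T"
    unfolding FBE_def val_def[symmetric] by (intro antisym INF_greatest INF_lower2[of T]) auto
  also have "T - x = - (\<gamma> *\<^sub>R R)" unfolding T_def R_def using \<gamma>(1) by (simp add: Tfb_eq_diff_Rfb)
  then have "val T = ereal (f x - \<gamma> * (gf x \<bullet> R) + \<gamma> / 2 * (norm R)\<^sup>2) + g T"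
    unfolding val_def using \<gamma>(1) by (simp add: power_mult_distrib power2_eq_square mult_ac)
  finally show ?thesis unfolding T_def R_def .
qed

lemma FBE_add_residual_le:
  fixes g :: "'a::euclidean_space \<Rightarrow> ereal"
  assumes pr: "proper_fun g" and "closed_fun g" and wc: "weakly_convex M g"
    and \<gamma>: "0 < \<gamma>" "\<gamma> * M < 1"
  shows "FBE f gf g \<gamma> x + ereal ((\<gamma> - M * \<gamma>\<^sup>2) / 2 * (norm (Rfb gf g \<gamma> x))\<^sup>2) \<le> ereal (f x) + g x"
proof (cases "g x")
  case (real gx)
  define y where "y = x - \<gamma> *\<^sub>R gf x"
  define T where "T = Tfb gf g \<gamma> x"
  define R where "R = Rfb gf g \<gamma> x"
  have T_min: "prox_minimizer g \<gamma> y T"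
    unfolding T_def Tfb_def y_def by (rule prox_minimizer_prox[OF assms])
  obtain gT where gT: "g T = ereal gT" using prox_minimizer_finite[OF pr T_min] .
  have "gT + (norm (T - y))\<^sup>2 / (2 * \<gamma>) + (1 / \<gamma> - M) / 2 * (norm (x - T))\<^sup>2
      \<le> gx + (norm (x - y))\<^sup>2 / (2 * \<gamma>)"
    by (rule prox_minimizer_growth[OF wc \<gamma>(1) T_min gT real])
  moreover have "T - x = - (\<gamma> *\<^sub>R R)" "x - T = \<gamma> *\<^sub>R R"
    unfolding T_def R_def using \<gamma>(1) by (simp_all add: Tfb_eq_diff_Rfb)
  ultimately have "gT + (\<gamma>\<^sup>2 * (norm R)\<^sup>2 / (2 * \<gamma>) - \<gamma> * (gf x \<bullet> R) + \<gamma> / 2 * (norm (gf x))\<^sup>2)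
      + (1 / \<gamma> - M) / 2 * (\<gamma>\<^sup>2 * (norm R)\<^sup>2) \<le> gx + \<gamma> / 2 * (norm (gf x))\<^sup>2"
    unfolding y_def norm_diff_gradient_step_power2[OF \<gamma>(1)] by (simp add: power_mult_distrib)
  moreover have "\<gamma>\<^sup>2 * (norm R)\<^sup>2 / (2 * \<gamma>) = \<gamma> / 2 * (norm R)\<^sup>2"
    "(1 / \<gamma> - M) / 2 * (\<gamma>\<^sup>2 * (norm R)\<^sup>2) = (\<gamma> - M * \<gamma>\<^sup>2) / 2 * (norm R)\<^sup>2"
    using \<gamma>(1) by (simp_all add: field_simps power2_eq_square)
  ultimately have "f x - \<gamma> * (gf x \<bullet> R) + \<gamma> / 2 * (norm R)\<^sup>2 + gT + (\<gamma> - M * \<gamma>\<^sup>2) / 2 * (norm R)\<^sup>2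
      \<le> f x + gx"
    by linarith
  then show ?thesis
    unfolding FBE_eq_at_Tfb[OF assms] T_def[symmetric] R_def[symmetric] gT real by simp
qed (use pr in \<open>auto simp: proper_fun_def\<close>)

lemma minfbe_accept_FBE_decrease:
  fixes g :: "'a::euclidean_space \<Rightarrow> ereal"
  assumes "proper_fun g" "closed_fun g" "weakly_convex M g" "0 < \<gamma>" "\<gamma> * M < 1"
    and acc: "minfbe_accept f gf g \<beta> \<gamma> w"
  shows "ereal (f (Tfb gf g \<gamma> w)) + g (Tfb gf g \<gamma> w) + ereal (\<beta> * \<gamma> / 2 * (norm (Rfb gf g \<gamma> w))\<^sup>2)
         \<le> FBE f gf g \<gamma> w"
proof -
  define T where "T = Tfb gf g \<gamma> w"
  define R where "R = Rfb gf g \<gamma> w"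
  have "(1 - \<beta>) * \<gamma> / 2 * (norm R)\<^sup>2 = \<gamma> / 2 * (norm R)\<^sup>2 - \<beta> * \<gamma> / 2 * (norm R)\<^sup>2"
    by (simp add: field_simps)
  with acc have "f T + \<beta> * \<gamma> / 2 * (norm R)\<^sup>2 \<le> f w - \<gamma> * (gf w \<bullet> R) + \<gamma> / 2 * (norm R)\<^sup>2"
    unfolding minfbe_accept_def T_def R_def by linarith
  then have "ereal (f T) + g T + ereal (\<beta> * \<gamma> / 2 * (norm R)\<^sup>2)
      \<le> ereal (f w - \<gamma> * (gf w \<bullet> R) + \<gamma> / 2 * (norm R)\<^sup>2) + g T"
    by (cases "g T") simp_all
  then show ?thesis unfolding FBE_eq_at_Tfb[OF assms(1-5)] T_def R_def .
qed

lemma minfbe_step_decrease: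
  fixes g :: "'a::euclidean_space \<Rightarrow> ereal"
  assumes "proper_fun g" "closed_fun g" "weakly_convex M g" "0 < \<gamma>" "\<gamma> * M < 1"
    and adm: "minfbe_admissible f gf g \<gamma> x w" and acc: "minfbe_accept f gf g \<beta> \<gamma> w"
  shows "ereal (f (Tfb gf g \<gamma> w)) + g (Tfb gf g \<gamma> w)
           + ereal ((\<gamma> - M * \<gamma>\<^sup>2) / 2 * (norm (Rfb gf g \<gamma> x))\<^sup>2 + \<beta> * \<gamma> / 2 * (norm (Rfb gf g \<gamma> w))\<^sup>2)
         \<le> ereal (f x) + g x"
proof -
  define T where "T = Tfb gf g \<gamma> w"
  define a where "a = (\<gamma> - M * \<gamma>\<^sup>2) / 2 * (norm (Rfb gf g \<gamma> x))\<^sup>2"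
  define b where "b = \<beta> * \<gamma> / 2 * (norm (Rfb gf g \<gamma> w))\<^sup>2"
  have "ereal (f T) + g T + ereal (a + b) = (ereal (f T) + g T + ereal b) + ereal a"
    by (cases "g T") simp_all
  also have "\<dots> \<le> FBE f gf g \<gamma> w + ereal a"
    using minfbe_accept_FBE_decrease[OF assms(1-5) acc] unfolding T_def b_def by (rule add_right_mono)
  also have "\<dots> \<le> FBE f gf g \<gamma> x + ereal a"
    using adm unfolding minfbe_admissible_def by (auto intro: add_right_mono)
  also have "\<dots> \<le> ereal (f x) + g x"
    unfolding a_def by (rule FBE_add_residual_le[OF assms(1-5)])
  finally show ?thesis unfolding T_def a_def b_def .
qed

lemma descent_lemma:
  fixes f :: "'a::real_inner \<Rightarrow> real"
  assumes f_deriv: "\<And>y. (f has_derivative (\<lambda>h. gf y \<bullet> h)) (at y)"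
    and lip: "L-lipschitz_on UNIV gf"
  shows "f y \<le> f x + gf x \<bullet> (y - x) + L / 2 * (norm (y - x))\<^sup>2"
proof -
  define d where "d = y - x"
  define \<phi> where "\<phi> t = f (x + t *\<^sub>R d) - t * (gf x \<bullet> d) - L / 2 * t\<^sup>2 * (norm d)\<^sup>2" for t
  have deriv: "(\<phi> has_real_derivative (gf (x + t *\<^sub>R d) \<bullet> d - gf x \<bullet> d - L * t * (norm d)\<^sup>2)) (at t)"
    for t
  proof -
    have line: "((\<lambda>t. x + t *\<^sub>R d) has_derivative (\<lambda>h. h *\<^sub>R d)) (at t)"
      by (auto intro!: derivative_eq_intros)
    have "(\<lambda>h. gf (x + t *\<^sub>R d) \<bullet> (h *\<^sub>R d)) = (*) (gf (x + t *\<^sub>R d) \<bullet> d)"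
      by (auto simp: fun_eq_iff)
    with has_derivative_compose[OF line f_deriv]
    have along: "((\<lambda>t. f (x + t *\<^sub>R d)) has_real_derivative (gf (x + t *\<^sub>R d) \<bullet> d)) (at t)"
      unfolding has_field_derivative_def by simp
    show ?thesis unfolding \<phi>_def by (rule derivative_eq_intros along refl | simp)+
  qed
  have "\<phi> 1 \<le> \<phi> 0"
  proof (rule DERIV_nonpos_imp_nonincreasing[of 0 1])
    fix t :: real assume t: "0 \<le> t" "t \<le> 1"
    have "gf (x + t *\<^sub>R d) \<bullet> d - gf x \<bullet> d \<le> norm (gf (x + t *\<^sub>R d) - gf x) * norm d"
      unfolding inner_diff_left[symmetric] by (rule norm_cauchy_schwarz)
    also have "\<dots> \<le> L * norm (t *\<^sub>R d) * norm d"
    proof (rule mult_right_mono)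
      show "norm (gf (x + t *\<^sub>R d) - gf x) \<le> L * norm (t *\<^sub>R d)"
        using lipschitz_onD[OF lip, of "x + t *\<^sub>R d" x] by (simp add: dist_norm)
    qed simp
    also have "\<dots> = L * t * (norm d)\<^sup>2" using t by (simp add: power2_eq_square)
    finally show "\<exists>y. (\<phi> has_real_derivative y) (at t) \<and> y \<le> 0"
      using deriv[of t] by (intro exI[of _ "gf (x + t *\<^sub>R d) \<bullet> d - gf x \<bullet> d - L * t * (norm d)\<^sup>2"]) simp
  qed simp
  then show ?thesis unfolding \<phi>_def d_def by simp
qed

lemma minfbe_accept_if_stepsize_le:
  fixes f :: "'a::real_inner \<Rightarrow> real"
  assumes f_deriv: "\<And>y. (f has_derivative (\<lambda>h. gf y \<bullet> h)) (at y)"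
    and lip: "L-lipschitz_on UNIV gf" and L: "0 < L" and \<gamma>: "0 < \<gamma>" "\<gamma> \<le> (1 - \<beta>) / L"
  shows "minfbe_accept f gf g \<beta> \<gamma> w"
proof -
  define T where "T = Tfb gf g \<gamma> w"
  define R where "R = Rfb gf g \<gamma> w"
  have T: "T - w = - (\<gamma> *\<^sub>R R)" unfolding T_def R_def using \<gamma>(1) by (simp add: Tfb_eq_diff_Rfb)
  have "f T \<le> f w - \<gamma> * (gf w \<bullet> R) + L / 2 * (\<gamma>\<^sup>2 * (norm R)\<^sup>2)"
    using descent_lemma[OF f_deriv lip, of T w] unfolding T by (simp add: power_mult_distrib)
  moreover have "L * \<gamma> \<le> 1 - \<beta>" using \<gamma> L by (simp add: pos_le_divide_eq mult.commute)
  then have "L / 2 * (\<gamma>\<^sup>2 * (norm R)\<^sup>2) \<le> (1 - \<beta>) * \<gamma> / 2 * (norm R)\<^sup>2"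
    using mult_right_mono[of "L * \<gamma>" "1 - \<beta>" "\<gamma> * (norm R)\<^sup>2"] \<gamma>(1)
    by (simp add: power2_eq_square mult_ac)
  ultimately show ?thesis unfolding minfbe_accept_def T_def R_def by linarith
qed

text \<open>A trial step size is only rejected when it exceeds (1 - beta)/L.\<close>
lemma backtracking_stepsize_bounds:
  fixes f :: "'a::real_inner \<Rightarrow> real"
  assumes f_deriv: "\<And>y. (f has_derivative (\<lambda>h. gf y \<bullet> h)) (at y)"
    and lip: "L-lipschitz_on UNIV gf" and L: "0 < L" and \<xi>: "0 < \<xi>" "\<xi> < 1" and "0 < \<gamma>p"
    and rejected: "\<forall>l<m. \<exists>w'. \<not> minfbe_accept f gf g \<beta> (\<xi> ^ l * \<gamma>p) w'"
  shows "min \<gamma>p (\<xi> * (1 - \<beta>) / L) \<le> \<xi> ^ m * \<gamma>p \<and> \<xi> ^ m * \<gamma>p \<le> \<gamma>p"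
proof
  show "\<xi> ^ m * \<gamma>p \<le> \<gamma>p"
    using \<xi> \<open>0 < \<gamma>p\<close> by (simp add: mult_left_le_one_le power_le_one)
  show "min \<gamma>p (\<xi> * (1 - \<beta>) / L) \<le> \<xi> ^ m * \<gamma>p"
  proof (cases m)
    case (Suc l)
    with rejected obtain w' where "\<not> minfbe_accept f gf g \<beta> (\<xi> ^ l * \<gamma>p) w'" by blast
    moreover have "0 < \<xi> ^ l * \<gamma>p" using \<xi> \<open>0 < \<gamma>p\<close> by simp
    ultimately have "\<not> \<xi> ^ l * \<gamma>p \<le> (1 - \<beta>) / L"
      using minfbe_accept_if_stepsize_le[OF f_deriv lip L] by blast
    then have "\<xi> * ((1 - \<beta>) / L) < \<xi> * (\<xi> ^ l * \<gamma>p)"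
      using \<xi> by (intro mult_strict_left_mono) auto
    then have "\<xi> * (1 - \<beta>) / L < \<xi> ^ m * \<gamma>p" using Suc by (simp add: mult.assoc)
    then show ?thesis by linarith
  qed simp
qed

lemma minfbe_seq_backtracking:
  assumes "minfbe_seq f gf g \<gamma>0 \<xi> \<beta> x w \<gamma>"
  obtains m where "\<gamma> k = \<xi> ^ m * (if k = 0 then \<gamma>0 else \<gamma> (k - 1))"
    and "\<forall>l<m. \<exists>w'. \<not> minfbe_accept f gf g \<beta> (\<xi> ^ l * (if k = 0 then \<gamma>0 else \<gamma> (k - 1))) w'"
  using assms unfolding minfbe_seq_def Let_def by blast

lemma minfbe_seq_step:
  assumes "minfbe_seq f gf g \<gamma>0 \<xi> \<beta> x w \<gamma>"
  shows "minfbe_admissible f gf g (\<gamma> k) (x k) (w k)" and "minfbe_accept f gf g \<beta> (\<gamma> k) (w k)"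
    and "x (Suc k) = Tfb gf g (\<gamma> k) (w k)"
  using assms unfolding minfbe_seq_def Let_def by blast+

lemma minfbe_seq_stepsize_bounds:
  fixes f :: "'a::real_inner \<Rightarrow> real"
  assumes f_deriv: "\<And>y. (f has_derivative (\<lambda>h. gf y \<bullet> h)) (at y)"
    and lip: "L-lipschitz_on UNIV gf" and L: "0 < L" and \<xi>: "0 < \<xi>" "\<xi> < 1"
    and \<gamma>0: "0 < \<gamma>0" and \<beta>: "\<beta> < 1" and gen: "minfbe_seq f gf g \<gamma>0 \<xi> \<beta> x w \<gamma>"
  shows "min \<gamma>0 (\<xi> * (1 - \<beta>) / L) \<le> \<gamma> k \<and> \<gamma> k \<le> \<gamma>0"
proof (induction k)
  case 0
  obtain m where "\<gamma> 0 = \<xi> ^ m * \<gamma>0" "\<forall>l<m. \<exists>w'. \<not> minfbe_accept f gf g \<beta> (\<xi> ^ l * \<gamma>0) w'"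
    using minfbe_seq_backtracking[OF gen, of 0] by auto
  then show ?case using backtracking_stepsize_bounds[OF f_deriv lip L \<xi> \<gamma>0] by simp
next
  case (Suc k)
  have "0 < min \<gamma>0 (\<xi> * (1 - \<beta>) / L)" using \<gamma>0 \<xi> \<beta> L by simp
  with Suc.IH have "0 < \<gamma> k" by linarith
  obtain m where "\<gamma> (Suc k) = \<xi> ^ m * \<gamma> k"
    "\<forall>l<m. \<exists>w'. \<not> minfbe_accept f gf g \<beta> (\<xi> ^ l * \<gamma> k) w'"
    using minfbe_seq_backtracking[OF gen, of "Suc k"] by auto
  with backtracking_stepsize_bounds[OF f_deriv lip L \<xi> \<open>0 < \<gamma> k\<close>]
  have "min (\<gamma> k) (\<xi> * (1 - \<beta>) / L) \<le> \<gamma> (Suc k) \<and> \<gamma> (Suc k) \<le> \<gamma> k" by simp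
  with Suc.IH show ?case by linarith
qed

lemma minfbe_seq_decrease:
  fixes g :: "'a::euclidean_space \<Rightarrow> ereal"
  assumes "proper_fun g" "closed_fun g" "weakly_convex M g" and M: "0 < M"
    and gen: "minfbe_seq f gf g \<gamma>0 \<xi> \<beta> x w \<gamma>" and \<beta>: "0 \<le> \<beta>"
    and c: "0 < c" "c \<le> \<gamma> k" "\<gamma> k \<le> 1 / (2 * M)"
  shows "ereal (f (x (Suc k))) + g (x (Suc k))
           + ereal ((c - M * c\<^sup>2) / 2 * (norm (Rfb gf g (\<gamma> k) (x k)))\<^sup>2
                    + \<beta> * c / 2 * (norm (Rfb gf g (\<gamma> k) (w k)))\<^sup>2)
         \<le> ereal (f (x k)) + g (x k)"
proof -
  have M\<gamma>: "M * \<gamma> k \<le> 1 / 2" using c(3) M by (simp add: field_simps)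
  have "c - M * c\<^sup>2 \<le> \<gamma> k - M * (\<gamma> k)\<^sup>2"
  proof -
    have "M * c \<le> M * \<gamma> k" using c(2) M by simp
    then have "M * (\<gamma> k + c) \<le> 1" unfolding distrib_left using M\<gamma> by linarith
    with c(2) have "0 \<le> (\<gamma> k - c) * (1 - M * (\<gamma> k + c))" by simp
    then show ?thesis by (simp add: power2_eq_square algebra_simps)
  qed
  moreover have "\<beta> * c \<le> \<beta> * \<gamma> k" using c(2) \<beta> by (rule mult_left_mono)
  ultimately have "(c - M * c\<^sup>2) / 2 * (norm (Rfb gf g (\<gamma> k) (x k)))\<^sup>2
        + \<beta> * c / 2 * (norm (Rfb gf g (\<gamma> k) (w k)))\<^sup>2
      \<le> (\<gamma> k - M * (\<gamma> k)\<^sup>2) / 2 * (norm (Rfb gf g (\<gamma> k) (x k)))\<^sup>2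
        + \<beta> * \<gamma> k / 2 * (norm (Rfb gf g (\<gamma> k) (w k)))\<^sup>2"
    by (intro add_mono mult_right_mono divide_right_mono) auto
  then have "ereal (f (x (Suc k))) + g (x (Suc k))
      + ereal ((c - M * c\<^sup>2) / 2 * (norm (Rfb gf g (\<gamma> k) (x k)))\<^sup>2
               + \<beta> * c / 2 * (norm (Rfb gf g (\<gamma> k) (w k)))\<^sup>2)
    \<le> ereal (f (x (Suc k))) + g (x (Suc k))
      + ereal ((\<gamma> k - M * (\<gamma> k)\<^sup>2) / 2 * (norm (Rfb gf g (\<gamma> k) (x k)))\<^sup>2
               + \<beta> * \<gamma> k / 2 * (norm (Rfb gf g (\<gamma> k) (w k)))\<^sup>2)"
    by (intro add_left_mono) simp
  also have "\<dots> \<le> ereal (f (x k)) + g (x k)"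
    unfolding minfbe_seq_step(3)[OF gen]
    using c M\<gamma> by (intro minfbe_step_decrease[OF assms(1-3)] minfbe_seq_step[OF gen]) (auto simp: mult.commute)
  finally show ?thesis .
qed

lemma min_le_of_sufficient_decrease:
  fixes \<Phi> r :: "nat \<Rightarrow> real"
  assumes dec: "\<And>k. \<Phi> (Suc k) + D / 2 * r k \<le> \<Phi> k" and low: "\<And>k. I \<le> \<Phi> k" and D: "0 < D"
  shows "(MIN i\<in>{..k}. r i) \<le> 2 / (real k + 1) * (\<Phi> 0 - I) / D"
proof -
  have telescope: "\<Phi> (Suc k) + (\<Sum>i\<le>k. D / 2 * r i) \<le> \<Phi> 0"
  proof (induction k)
    case 0
    show ?case using dec[of 0] by simp
  next
    case (Suc k)
    show ?case using Suc.IH dec[of "Suc k"] unfolding sum.atMost_Suc by linarith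
  qed
  have "real (Suc k) * (MIN i\<in>{..k}. r i) \<le> (\<Sum>i\<le>k. r i)"
    using sum_bounded_below[of "{..k}" "MIN i\<in>{..k}. r i" r] by simp
  then have "D / 2 * (real (Suc k) * (MIN i\<in>{..k}. r i)) \<le> (\<Sum>i\<le>k. D / 2 * r i)"
    unfolding sum_distrib_left[symmetric] using D by (simp add: mult_left_mono)
  also have "\<dots> \<le> \<Phi> 0 - I" using telescope low[of "Suc k"] by linarith
  finally have "(MIN i\<in>{..k}. r i) * (D / 2 * real (Suc k)) \<le> \<Phi> 0 - I" by (simp add: mult_ac)
  moreover have "2 / (real k + 1) * (\<Phi> 0 - I) / D = (\<Phi> 0 - I) / (D / 2 * real (Suc k))"
    by (simp add: field_simps)
  ultimately show ?thesis using D by (simp add: pos_le_divide_eq)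
qed

lemma ereal_min_le_of_sufficient_decrease:
  fixes \<phi> :: "nat \<Rightarrow> ereal" and r :: "nat \<Rightarrow> real"
  assumes dec: "\<And>k. \<phi> (Suc k) + ereal (D / 2 * r k) \<le> \<phi> k" and low: "\<And>k. I \<le> \<phi> k" and D: "0 < D"
  shows "ereal (MIN i\<in>{..k}. r i) \<le> ereal (2 / (real k + 1)) * (\<phi> 0 - I) / ereal D"
proof (cases "\<phi> 0 = \<infinity> \<or> I = -\<infinity>")
  case True
  then have "\<phi> 0 - I = \<infinity>" by auto
  then show ?thesis using D by simp
next
  case False
  then obtain i where i: "I = ereal i" using low[of 0] by (cases I) auto
  have \<phi>_real: "\<phi> k = ereal (real_of_ereal (\<phi> k))" for k
  proof -
    have "\<phi> k \<noteq> \<infinity>"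
    proof (induction k)
      case (Suc k)
      then show ?case using dec[of k] by auto
    qed (use False in auto)
    moreover have "\<phi> k \<noteq> -\<infinity>" using low[of k] i by auto
    ultimately show ?thesis by (cases "\<phi> k") auto
  qed
  have "(MIN i\<in>{..k}. r i) \<le> 2 / (real k + 1) * (real_of_ereal (\<phi> 0) - i) / D"
  proof (rule min_le_of_sufficient_decrease[OF _ _ D])
    show "real_of_ereal (\<phi> (Suc k)) + D / 2 * r k \<le> real_of_ereal (\<phi> k)" for k
      using dec[of k] \<phi>_real[of k] \<phi>_real[of "Suc k"] by (metis ereal_less_eq(3) plus_ereal.simps(1))
    show "i \<le> real_of_ereal (\<phi> k)" for k using low[of k] \<phi>_real[of k] i by (metis ereal_less_eq(3))
  qed
  moreover have "ereal (2 / (real k + 1)) * (\<phi> 0 - I) / ereal D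
      = ereal (2 / (real k + 1) * (real_of_ereal (\<phi> 0) - i) / D)"
    using D by (subst \<phi>_real[of 0]) (simp add: i)
  ultimately show ?thesis by simp
qed

theorem theorem2p11:
  fixes f :: "real ^ 'n \<Rightarrow> real" and gf :: "real ^ 'n \<Rightarrow> real ^ 'n"
    and g :: "real ^ 'n \<Rightarrow> ereal"
    and Lf M \<gamma>0 \<xi> \<beta> c :: real
    and x w :: "nat \<Rightarrow> real ^ 'n" and \<gamma> :: "nat \<Rightarrow> real"
  assumes f_deriv: "\<And>y. (f has_derivative (\<lambda>h. gf y \<bullet> h)) (at y)"
    and gf_cont: "continuous_on UNIV gf"
    and gf_lip: "Lf-lipschitz_on UNIV gf"
    and Lf_pos: "Lf > 0"
    and g_proper: "proper_fun g"
    and g_closed: "closed_fun g"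
    and M_pos: "M > 0"
    and g_wc: "weakly_convex M g"
    and \<xi>: "0 < \<xi>" "\<xi> < 1"
    and \<beta>: "0 \<le> \<beta>" "\<beta> < 1"
    and \<gamma>0: "0 < \<gamma>0" "\<gamma>0 \<le> 1 / (2 * M)"
    and gen: "minfbe_seq f gf g \<gamma>0 \<xi> \<beta> x w \<gamma>"
    and c_def: "c = min \<gamma>0 (min (\<xi> * (1 - \<beta>) / Lf) (1 / M))"
  shows "c > 0 \<and>
    (\<forall>k. ereal (MIN i\<in>{..k}. (norm (Rfb gf g (\<gamma> i) (x i)))\<^sup>2)
         \<le> ereal (2 / (real k + 1)) *
           ((ereal (f (x 0)) + g (x 0)) - (INF y. ereal (f y) + g y)) / ereal (c - M * c\<^sup>2)) \<and>
    (\<beta> > 0 \<longrightarrow>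
      (\<forall>k. ereal (MIN i\<in>{..k}. (norm (Rfb gf g (\<gamma> i) (w i)))\<^sup>2)
         \<le> ereal (2 / (real k + 1)) *
           ((ereal (f (x 0)) + g (x 0)) - (INF y. ereal (f y) + g y)) / ereal (\<beta> * c)))"
proof -
  have c_pos: "0 < c" using c_def \<gamma>0 \<xi> \<beta> Lf_pos M_pos by simp
  have \<gamma>_bounds: "c \<le> \<gamma> k \<and> \<gamma> k \<le> 1 / (2 * M)" for k
    using minfbe_seq_stepsize_bounds[OF f_deriv gf_lip Lf_pos \<xi> \<gamma>0(1) \<beta>(2) gen, of k] \<gamma>0(2) c_def
    by auto
  have "M * c \<le> M * \<gamma>0" using c_def M_pos by simp
  moreover have "M * \<gamma>0 \<le> 1 / 2" using \<gamma>0(2) M_pos by (simp add: field_simps)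
  ultimately have "M * c < 1" by linarith
  then have D_pos: "0 < c - M * c\<^sup>2" using c_pos by (simp add: power2_eq_square algebra_simps)
  let ?\<phi> = "\<lambda>k. ereal (f (x k)) + g (x k)"
  have decrease: "?\<phi> (Suc k) + ereal ((c - M * c\<^sup>2) / 2 * (norm (Rfb gf g (\<gamma> k) (x k)))\<^sup>2
                    + \<beta> * c / 2 * (norm (Rfb gf g (\<gamma> k) (w k)))\<^sup>2) \<le> ?\<phi> k" for k
    using minfbe_seq_decrease[OF g_proper g_closed g_wc M_pos gen \<beta>(1) c_pos] \<gamma>_bounds by blast
  have weaken: "\<Phi> + ereal a \<le> \<Psi>" if "\<Phi> + ereal (a + b) \<le> \<Psi>" "0 \<le> b" for \<Phi> \<Psi> :: ereal and a b
    using order_trans[OF add_left_mono[of "ereal a" "ereal (a + b)" \<Phi>] that(1)] that(2) by simp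
  have lower: "(INF y. ereal (f y) + g y) \<le> ?\<phi> k" for k by (rule INF_lower) simp
  show ?thesis
  proof (intro conjI allI impI c_pos)
    show "ereal (MIN i\<in>{..k}. (norm (Rfb gf g (\<gamma> i) (x i)))\<^sup>2)
      \<le> ereal (2 / (real k + 1)) * (?\<phi> 0 - (INF y. ereal (f y) + g y)) / ereal (c - M * c\<^sup>2)" for k
      using weaken[OF decrease] c_pos \<beta>(1)
      by (intro ereal_min_le_of_sufficient_decrease[OF _ lower D_pos]) simp
    show "ereal (MIN i\<in>{..k}. (norm (Rfb gf g (\<gamma> i) (w i)))\<^sup>2)
      \<le> ereal (2 / (real k + 1)) * (?\<phi> 0 - (INF y. ereal (f y) + g y)) / ereal (\<beta> * c)"
      if "\<beta> > 0" for k
      using weaken[OF decrease[unfolded add.commute[of "(c - M * c\<^sup>2) / 2 * _"]]] D_pos that c_pos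
      by (intro ereal_min_le_of_sufficient_decrease[OF _ lower]) simp_all
  qed
qed

end
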